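(* Let $q\in\mathbb{C}$ with $|q|<1$ and let $k,l\ge0$ be integers. Then for $x\in[0,1]$, $$B_{k,l}(x,q)=\frac{k!}{[k]_q!}x^k\sum_{m=0}^l\frac{[m]_q!}{m!}S(m,k)\,\beta_{l-m}^{(k)}((1-x)_q,q)\binom{l}{m}_q.$$
   Context: For a number $x$, $[x]_q=\frac{1-q^x}{1-q}$; $[n]_q!=[n]_q\cdots[1]_q$, $[0]_q!=1$; $\binom{n}{k}_q=\frac{[n]_q!}{[k]_q![n-k]_q!}$ for $0\le k\le n$ and $0$ for $k>n$. $(1-b)_q^n=\prod_{i=1}^n(1-bq^{i-1})$. $B_{k,n}(x,q)=\binom{n}{k}_q x^k(1-x)_q^{n-k}$ if $n\ge k$ and $0$ if $n<k$. $S(m,k)$ are the Stirling numbers of the second kind: $\frac{(e^t-1)^k}{k!}=\sum_{m\ge0}S(m,k)\frac{t^m}{m!}$. $B_m^{(k)}$ are the Bernoulli numbers of order $k$: $\left(\frac{t}{e^t-1}\right)^k=\sum_{m\ge0}B_m^{(k)}\frac{t^m}{m!}$. The $q$-Bernoulli polynomials of order $k$ are defined by $\left(\frac{z}{e^z-1}\right)^k e_q(zy)=\sum_{n\ge0}\beta_n^{(k)}(y,q)\frac{z^n}{[n]_q!}$, where $e_q(zy)=\sum_{j\ge0}\frac{y^jz^j}{[j]_q!}$, so $\beta_n^{(k)}(y,q)=\sum_{m=0}^n\binom{n}{m}_q\frac{[m]_q!}{m!}B_m^{(k)}y^{n-m}$. The symbol $\beta_n^{(k)}((1-x)_q,q)$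 is understood umbrally, i.e. each power $y^{j}$ is replaced by $(1-x)_q^{j}$: $\beta_n^{(k)}((1-x)_q,q)=\sum_{m=0}^n\binom{n}{m}_q\frac{[m]_q!}{m!}B_m^{(k)}(1-x)_q^{n-m}$ (equivalently, $\left(\frac{t}{e^t-1}\right)^k\sum_{j\ge0}\frac{(1-x)_q^jt^j}{[j]_q!}=\sum_{n\ge0}\beta_n^{(k)}((1-x)_q,q)\frac{t^n}{[n]_q!}$ as formal power series). *)

theory Defs
  imports "HOL-Combinatorics.Stirling" "HOL-Computational_Algebra.Formal_Power_Series"
begin

definition qint :: "complex \<Rightarrow> nat \<Rightarrow> complex" where
  "qint q n = (1 - q ^ n) / (1 - q)"

definition qfact :: "complex \<Rightarrow> nat \<Rightarrow> complex" where
  "qfact q n = (\<Prod>i=1..n. qint q i)"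

definition qbinom :: "complex \<Rightarrow> nat \<Rightarrow> nat \<Rightarrow> complex" where
  "qbinom q n k = (if k \<le> n then qfact q n / (qfact q k * qfact q (n - k)) else 0)"

text \<open>(1 - b)_q^n = prod_{i=1}^n (1 - b q^(i-1))\<close>
definition qpoch :: "complex \<Rightarrow> complex \<Rightarrow> nat \<Rightarrow> complex" where
  "qpoch b q n = (\<Prod>i=1..n. 1 - b * q ^ (i - 1))"

definition qBernstein :: "nat \<Rightarrow> nat \<Rightarrow> complex \<Rightarrow> complex \<Rightarrow> complex" where
  "qBernstein k n x q = (if k \<le> n then qbinom q n k * x ^ k * qpoch x q (n - k) else 0)"

text \<open>The formal power series t/(e^t - 1).\<close>
definition bern_gen :: "complex fps" where
  "bern_gen = inverse (fps_shift 1 (fps_exp 1 - 1))"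

definition bernoulli_order :: "nat \<Rightarrow> nat \<Rightarrow> complex" where
  "bernoulli_order k m = fact m * fps_nth (bern_gen ^ k) m"

text \<open>beta_n^(k)((1-x)_q, q), umbral reading\<close>
definition qbeta_umbral :: "nat \<Rightarrow> nat \<Rightarrow> complex \<Rightarrow> complex \<Rightarrow> complex" where
  "qbeta_umbral k n x q =
     (\<Sum>m=0..n. qbinom q n m * qfact q m / fact m * bernoulli_order k m * qpoch x q (n - m))"

end

theory Submission imports Defs begin

text \<open>
  The Stirling numbers are the coefficients of \<open>(e\<^sup>t - 1)\<^sup>k / k!\<close>, and
  \<open>(t/(e\<^sup>t - 1))\<^sup>k (e\<^sup>t - 1)\<^sup>k = t\<^sup>k\<close>, so the Cauchy product of the two coefficient sequences
  \<open>S(i,k)/i!\<close> and \<open>B\<^sub>j\<^sup>(\<^sup>k\<^sup>)/j!\<close> is \<open>[s = k]/k!\<close>. Expanding \<open>\<beta>\<^sup>(\<^sup>k\<^sup>)\<close> turns the right-hand side into a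
  double sum over \<open>m + j \<le> l\<close>, whose q-binomial weights depend only on \<open>s = m + j\<close>;
  grouping by \<open>s\<close>, only the term \<open>s = k\<close> survives, and it is the q-Bernstein polynomial.
  The identity holds for every complex \<open>x\<close>.
\<close>

lemma fps_exp_minus_one_power_nth:
  "fps_nth ((fps_exp (1::'a::field_char_0) - 1) ^ k) m = fact k * of_nat (Stirling m k) / fact m"
proof (induction m arbitrary: k)
  case 0
  then show ?case by (cases k) auto
next
  case (Suc m)
  show ?case
  proof (cases k)
    case 0
    then show ?thesis by simp
  next
    case (Suc k')
    let ?E = "fps_exp (1::'a) - 1"
    have "fps_deriv (?E ^ Suc k') = of_nat (Suc k') * ?E ^ k' * fps_exp 1"
      by (simp only: fps_deriv_power') (simp add: mult.commute)
    also have "\<dots> = of_nat (Suc k') * (?E ^ Suc k' + ?E ^ k')"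
      by (simp add: algebra_simps)
    finally have deriv: "fps_deriv (?E ^ Suc k') = of_nat (Suc k') * (?E ^ Suc k' + ?E ^ k')" .
    have "of_nat (Suc m) * fps_nth (?E ^ Suc k') (Suc m) = fps_nth (fps_deriv (?E ^ Suc k')) m"
      by (simp only: fps_deriv_nth) simp
    also have "\<dots> = of_nat (Suc k') * (fps_nth (?E ^ Suc k') m + fps_nth (?E ^ k') m)"
      unfolding deriv by (simp add: fps_of_nat[symmetric] del: fps_of_nat)
    also have "\<dots> = of_nat (Suc k') * (fact (Suc k') * of_nat (Stirling m (Suc k')) / fact m
                                      + fact k' * of_nat (Stirling m k') / fact m)"
      by (simp only: Suc.IH)
    also have "\<dots> = fact (Suc k') * of_nat (Stirling (Suc m) (Suc k')) / fact m"
      by (simp add: fact_Suc algebra_simps add_divide_distrib)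
    finally show ?thesis
      using Suc by (simp add: field_simps del: of_nat_Suc)
  qed
qed

lemma bern_gen_power_mult_exp_minus_one_power:
  "bern_gen ^ k * (fps_exp 1 - 1) ^ k = fps_X ^ k"
proof -
  define A where "A = fps_shift 1 (fps_exp (1::complex) - 1)"
  have exp_minus_one: "fps_exp (1::complex) - 1 = A * fps_X"
    unfolding A_def
  proof (rule fps_shift_times_fps_X[symmetric], rule subdegree_geI)
    have "fps_nth (fps_exp (1::complex) - 1) 1 = 1" by simp
    then show "fps_exp (1::complex) - 1 \<noteq> 0" by (metis fps_zero_nth zero_neq_one)
  qed (simp add: less_Suc_eq_0_disj)
  have "bern_gen * A = 1"
    unfolding bern_gen_def A_def by (rule inverse_mult_eq_1) simp
  then show ?thesis
    by (simp add: exp_minus_one power_mult_distrib flip: mult.assoc power_mult_distrib)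
qed

lemma Stirling_bernoulli_order_convolution:
  "(\<Sum>i\<le>s. of_nat (Stirling i k) / fact i * (bernoulli_order k (s - i) / fact (s - i)))
     = (if s = k then 1 / fact k else 0)"
proof -
  let ?P = "(fps_exp (1::complex) - 1) ^ k"
  have "fps_nth (?P * bern_gen ^ k) s =
      fact k * (\<Sum>i\<le>s. of_nat (Stirling i k) / fact i * (bernoulli_order k (s - i) / fact (s - i)))"
    unfolding fps_mult_nth fps_exp_minus_one_power_nth bernoulli_order_def
    by (simp add: sum_distrib_left atLeast0AtMost mult_ac)
  moreover have "fps_nth (?P * bern_gen ^ k) s = (if s = k then 1 else 0)"
    using bern_gen_power_mult_exp_minus_one_power[of k] by (simp add: mult.commute)
  ultimately show ?thesis by (auto simp: field_simps)
qed

lemma qint_nonzero: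
  assumes "norm q < 1" "n \<ge> 1"
  shows "qint q n \<noteq> 0"
proof -
  have "norm (q ^ n) < 1" using assms by (simp add: norm_power power_less_one_iff)
  then have "q ^ n \<noteq> 1" by auto
  moreover have "q \<noteq> 1" using assms by auto
  ultimately show ?thesis by (simp add: qint_def)
qed

lemma qfact_nonzero: "norm q < 1 \<Longrightarrow> qfact q n \<noteq> 0"
  unfolding qfact_def using qint_nonzero by (simp add: prod_zero_iff)

lemma qbinom_mult_qbinom:
  assumes "norm q < 1" "m + j \<le> l"
  shows "qbinom q l m * qbinom q (l - m) j * qfact q m * qfact q j = qfact q l / qfact q (l - m - j)"
  using assms qfact_nonzero[OF assms(1)] by (simp add: qbinom_def field_simps)

lemma sum_Stirling_qbeta_umbral:
  assumes "norm q < 1"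
  shows "(\<Sum>m=0..l. qfact q m / fact m * of_nat (Stirling m k) *
            qbeta_umbral k (l - m) x q * qbinom q l m)
       = (if k \<le> l then qfact q l / qfact q (l - k) * qpoch x q (l - k) / fact k else 0)"
proof -
  define a where "a i = of_nat (Stirling i k) / (fact i :: complex)" for i
  define b where "b j = bernoulli_order k j / (fact j :: complex)" for j
  define g where "g s = qfact q l / qfact q (l - s) * qpoch x q (l - s)" for s
  have term_eq: "qfact q m / fact m * of_nat (Stirling m k) *
       (qbinom q (l - m) j * qfact q j / fact j * bernoulli_order k j * qpoch x q (l - m - j)) *
       qbinom q l m = a m * b j * g (m + j)" if "m + j \<le> l" for m j
  proof -
    have "qfact q m / fact m * of_nat (Stirling m k) *
       (qbinom q (l - m) j * qfact q j / fact j * bernoulli_order k j * qpoch x q (l - m - j)) *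
       qbinom q l m = a m * b j * qpoch x q (l - m - j) *
         (qbinom q l m * qbinom q (l - m) j * qfact q m * qfact q j)"
      by (simp add: a_def b_def)
    then show ?thesis
      unfolding qbinom_mult_qbinom[OF assms that] g_def by (simp add: diff_diff_add)
  qed
  have "(\<Sum>m=0..l. qfact q m / fact m * of_nat (Stirling m k) *
           qbeta_umbral k (l - m) x q * qbinom q l m)
      = (\<Sum>m=0..l. \<Sum>j=0..l - m. a m * b j * g (m + j))"
    unfolding qbeta_umbral_def sum_distrib_left sum_distrib_right
    by (intro sum.cong refl term_eq) auto
  also have "\<dots> = (\<Sum>(m, j)\<in>{(m, j). m + j \<le> l}. a m * b j * g (m + j))"
    by (simp add: sum.Sigma) (rule sum.cong; auto)
  also have "\<dots> = (\<Sum>s\<le>l. \<Sum>i\<le>s. a i * b (s - i) * g (i + (s - i)))"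
    by (rule sum.triangle_reindex_eq)
  also have "\<dots> = (\<Sum>s\<le>l. g s * (\<Sum>i\<le>s. a i * b (s - i)))"
    by (intro sum.cong refl) (simp add: sum_distrib_left mult_ac)
  also have "\<dots> = (\<Sum>s\<le>l. if s = k then g k / fact k else 0)"
    unfolding a_def b_def Stirling_bernoulli_order_convolution
    by (intro sum.cong refl) auto
  finally show ?thesis by (simp add: g_def)
qed

theorem theorem10:
  fixes q :: complex and k l :: nat and x :: real
  assumes "norm q < 1" and "0 \<le> x" and "x \<le> 1"
  shows "qBernstein k l (complex_of_real x) q =
    fact k / qfact q k * (complex_of_real x) ^ k *
      (\<Sum>m=0..l. qfact q m / fact m * of_nat (Stirling m k) *
         qbeta_umbral k (l - m) (complex_of_real x) q * qbinom q l m)"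
  unfolding sum_Stirling_qbeta_umbral[OF assms(1)]
  using qfact_nonzero[OF assms(1)]
  by (simp add: qBernstein_def qbinom_def field_simps)

end
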